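(* Let $\alpha_0=(X_0,\beta_0,\tau_0)$ be a non-saturated pre-action of $\Gamma=\mathrm{BS}(m,n)$, let $x\in X_0$, and let $\alpha$ be a one orbit free $\mathtt r$-extension of $(\alpha_0,x)$ (for some transfer rule $\mathtt r$), with new $\beta$-orbit containing the chosen point $y$, of cardinality $L_y$. Let $\varepsilon=1$ if the extension is positive and $\varepsilon=-1$ if negative. Let $x_0\in X_0$ lie in the same connected component of $\mathrm{Sch}(\alpha_0)$ as $x$, and let $c$ be any path from $x_0$ to $x$ in $\mathrm{Sch}(\alpha_0)$. Then: (1) if $L_y<\infty$, $\mathrm{Stab}_\alpha(x_0)=\langle\mathrm{Stab}_{\alpha_0}(x_0),\ \Psi(c)\,t^{\varepsilon}b^{L_y}t^{-\varepsilon}\,\Psi(c)^{-1}\rangle$; (2) if $L_y=\infty$, or if the extension is maximal (i.e. $L_y=|m|L_x/\gcd(L_x,n)$ when positive and $L_y=|n|L_x/\gcd(L_x,m)$ when negative, where $L_x=|x\langle\beta_0\rangle|$), then $\mathrm{Stab}_\alpha(x_0)=\mathrm{Stab}_{\alpha_0}(x_0)$.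
   Context: $\mathrm{BS}(m,n)=\langle b,t\mid tb^mt^{-1}=b^n\rangle$, $|m|,|n|\ge2$; maps act on the right. A pre-action is $(X,\beta,\tau)$ with $\beta$ a bijection of $X$, $\tau$ a partial bijection with $\beta^n$-invariant domain, $\beta^m$-invariant range, and $x\tau\beta^m=x\beta^n\tau$ on $\mathrm{dom}(\tau)$; saturated means $\mathrm{dom}(\tau)=\mathrm{rng}(\tau)=X$. Its Schreier graph $\mathrm{Sch}(\alpha)$ has vertex set $X$, a $b$-labelled edge $x\to x\beta$ (with opposite $b^{-1}$-edge) for all $x$, and a $t$-labelled edge $x\to x\tau$ (with opposite $t^{-1}$-edge) for $x\in\mathrm{dom}(\tau)$. For a path $c$, $\Psi(c)\in\Gamma$ is the element represented by the word read along $c$ (so the endpoint of $c$ is the start point acted on by $\Psi(c)$). $\mathrm{Stab}_\alpha(x_0)$ is the image of $\pi_1(\mathrm{Sch}(\alpha),x_0)$ under $\Psi$. Transfer rule: a map $\mathtt r:(\mathbb{Z}_{\ge1}\cup\{\infty\})\times\{\pm\}\to\mathbb{Z}_{\ge1}\cup\{\infty\}$ with $L'=\mathtt r(L,\epsilon)$ satisfying $L/\gcd(L,n)=L'/\gcd(L',m)$ if $\epsilon=+$, $L/\gcd(L,m)=L'/\gcd(L',n)$ if $\epsilon=-$ ($\gcd(\infty,k)=|k|$; infinite on one side means infinite on both). One orbit free $\mathtt r$-extension of $(\alpha_0,x)$, $L=|x\langle\beta_0\rangle|$: positive (if $x\notin\mathrm{dom}(\tau_0)$): adjoin a new set $O'$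 of size $L'=\mathtt r(L,+)$ carrying a transitive permutation $\beta'$ (an $L'$-cycle, or a $\mathbb{Z}$-translation if infinite), pick $y\in O'$, extend $\beta_0$ by $\beta'$ and $\tau_0$ by $x\beta_0^{jn}\mapsto y\beta'^{jm}$ ($j\in\mathbb{Z}$); negative (if $x\notin\mathrm{rng}(\tau_0)$): same with $L'=\mathtt r(L,-)$ and $\tau_0$ extended by $y\beta'^{jn}\mapsto x\beta_0^{jm}$. *)

theory Defs
  imports "HOL-Algebra.Generated_Groups" "HOL-Library.Extended_Nat"
begin

datatype gen = B | T

text \<open>Words over the symmetric generating set: (g, True) is g, (g, False) is g^-1.\<close>
type_synonym word = "(gen \<times> bool) list"

definition gpow :: "gen \<Rightarrow> int \<Rightarrow> word" where
  "gpow g k = replicate (nat \<bar>k\<bar>) (g, k \<ge> 0)"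

inductive_set bs_rel :: "int \<Rightarrow> int \<Rightarrow> (word \<times> word) set" for m n where
  refl: "(w, w) \<in> bs_rel m n"
| sym: "(u, v) \<in> bs_rel m n \<Longrightarrow> (v, u) \<in> bs_rel m n"
| trans: "(u, v) \<in> bs_rel m n \<Longrightarrow> (v, w) \<in> bs_rel m n \<Longrightarrow> (u, w) \<in> bs_rel m n"
| cong: "(u, v) \<in> bs_rel m n \<Longrightarrow> (p @ u @ q, p @ v @ q) \<in> bs_rel m n"
| cancel: "([(g, s), (g, \<not> s)], []) \<in> bs_rel m n"
| relator: "([(T, True)] @ gpow B m @ [(T, False)], gpow B n) \<in> bs_rel m n"

definition gcls :: "int \<Rightarrow> int \<Rightarrow> word \<Rightarrow> word set" where
  "gcls m n w = bs_rel m n `` {w}"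

definition BS :: "int \<Rightarrow> int \<Rightarrow> word set monoid" where
  "BS m n = \<lparr> carrier = UNIV // bs_rel m n,
              monoid.mult = (\<lambda>P Q. \<Union>u\<in>P. \<Union>v\<in>Q. gcls m n (u @ v)),
              one = gcls m n [] \<rparr>"

section \<open>Pre-actions (maps act on the right)\<close>

definition bpow :: "'a set \<Rightarrow> ('a \<Rightarrow> 'a) \<Rightarrow> int \<Rightarrow> 'a \<Rightarrow> 'a" where
  "bpow A f k = (if k \<ge> 0 then f ^^ nat k else inv_into A f ^^ nat (- k))"

definition borbit :: "'a set \<Rightarrow> ('a \<Rightarrow> 'a) \<Rightarrow> 'a \<Rightarrow> 'a set" where
  "borbit A f z = {bpow A f k z | k. True}"

definition ecard :: "'a set \<Rightarrow> enat" where
  "ecard A = (if finite A then enat (card A) else \<infinity>)"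

definition pre_action :: "int \<Rightarrow> int \<Rightarrow> 'a set \<Rightarrow> ('a \<Rightarrow> 'a) \<Rightarrow> ('a \<rightharpoonup> 'a) \<Rightarrow> bool" where
  "pre_action m n X \<beta> \<tau> \<longleftrightarrow>
     bij_betw \<beta> X X \<and> dom \<tau> \<subseteq> X \<and> ran \<tau> \<subseteq> X \<and> inj_on \<tau> (dom \<tau>) \<and>
     bpow X \<beta> n ` dom \<tau> = dom \<tau> \<and> bpow X \<beta> m ` ran \<tau> = ran \<tau> \<and>
     (\<forall>z \<in> dom \<tau>. \<tau> (bpow X \<beta> n z) = map_option (bpow X \<beta> m) (\<tau> z))"

definition saturated :: "'a set \<Rightarrow> ('a \<rightharpoonup> 'a) \<Rightarrow> bool" where
  "saturated X \<tau> \<longleftrightarrow> dom \<tau> = X \<and> ran \<tau> = X"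

section \<open>Schreier graph: paths are determined by start point and label word\<close>

fun step :: "'a set \<Rightarrow> ('a \<Rightarrow> 'a) \<Rightarrow> ('a \<rightharpoonup> 'a) \<Rightarrow> 'a \<Rightarrow> gen \<times> bool \<Rightarrow> 'a option" where
  "step X \<beta> \<tau> z (B, True) = (if z \<in> X then Some (\<beta> z) else None)"
| "step X \<beta> \<tau> z (B, False) = (if z \<in> X then Some (inv_into X \<beta> z) else None)"
| "step X \<beta> \<tau> z (T, True) = \<tau> z"
| "step X \<beta> \<tau> z (T, False) = (if z \<in> ran \<tau> then Some (THE u. \<tau> u = Some z) else None)"

fun follow :: "'a set \<Rightarrow> ('a \<Rightarrow> 'a) \<Rightarrow> ('a \<rightharpoonup> 'a) \<Rightarrow> 'a \<Rightarrow> word \<Rightarrow> 'a option" where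
  "follow X \<beta> \<tau> z [] = Some z"
| "follow X \<beta> \<tau> z (l # w) =
     (case step X \<beta> \<tau> z l of None \<Rightarrow> None | Some z' \<Rightarrow> follow X \<beta> \<tau> z' w)"

text \<open>Stab(x0) = \<Psi>(\<pi>_1(Sch, x0)): elements read along closed paths at x0.\<close>
definition Stab :: "int \<Rightarrow> int \<Rightarrow> 'a set \<Rightarrow> ('a \<Rightarrow> 'a) \<Rightarrow> ('a \<rightharpoonup> 'a) \<Rightarrow> 'a \<Rightarrow> word set set" where
  "Stab m n X \<beta> \<tau> x0 = {gcls m n w | w. follow X \<beta> \<tau> x0 w = Some x0}"

text \<open>Sign: True = +, False = -. gcd(\<infinity>,k) = |k|, so infinite on one side iff on the other.\<close>
definition transfer_rule :: "int \<Rightarrow> int \<Rightarrow> (enat \<Rightarrow> bool \<Rightarrow> enat) \<Rightarrow> bool" where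
  "transfer_rule m n r \<longleftrightarrow>
     (\<forall>L s. L \<ge> 1 \<longrightarrow> r L s \<ge> 1 \<and> (L = \<infinity> \<longleftrightarrow> r L s = \<infinity>) \<and>
        (\<forall>a b. L = enat a \<longrightarrow> r L s = enat b \<longrightarrow>
           (if s then int a div gcd (int a) n = int b div gcd (int b) m
                 else int a div gcd (int a) m = int b div gcd (int b) n)))"

definition one_orbit_free_ext ::
  "int \<Rightarrow> int \<Rightarrow> (enat \<Rightarrow> bool \<Rightarrow> enat) \<Rightarrow> 'a set \<Rightarrow> ('a \<Rightarrow> 'a) \<Rightarrow> ('a \<rightharpoonup> 'a) \<Rightarrow> 'a \<Rightarrow>
   'a set \<Rightarrow> ('a \<Rightarrow> 'a) \<Rightarrow> ('a \<rightharpoonup> 'a) \<Rightarrow> 'a set \<Rightarrow> 'a \<Rightarrow> bool \<Rightarrow> bool" where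
  "one_orbit_free_ext m n r X0 \<beta>0 \<tau>0 x X \<beta> \<tau> Y y s \<longleftrightarrow>
     x \<in> X0 \<and> Y \<inter> X0 = {} \<and> y \<in> Y \<and> bij_betw \<beta> Y Y \<and> Y = borbit Y \<beta> y \<and>
     ecard Y = r (ecard (borbit X0 \<beta>0 x)) s \<and>
     X = X0 \<union> Y \<and> (\<forall>z \<in> X0. \<beta> z = \<beta>0 z) \<and> (\<forall>z \<in> dom \<tau>0. \<tau> z = \<tau>0 z) \<and>
     (if s then
        x \<notin> dom \<tau>0 \<and>
        dom \<tau> = dom \<tau>0 \<union> {bpow X0 \<beta>0 (j * n) x | j. True} \<and>
        (\<forall>j. \<tau> (bpow X0 \<beta>0 (j * n) x) = Some (bpow Y \<beta> (j * m) y))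
      else
        x \<notin> ran \<tau>0 \<and>
        dom \<tau> = dom \<tau>0 \<union> {bpow Y \<beta> (j * n) y | j. True} \<and>
        (\<forall>j. \<tau> (bpow Y \<beta> (j * n) y) = Some (bpow X0 \<beta>0 (j * m) x)))"

definition maximal_ext :: "int \<Rightarrow> int \<Rightarrow> bool \<Rightarrow> enat \<Rightarrow> enat \<Rightarrow> bool" where
  "maximal_ext m n s Lx Ly \<longleftrightarrow>
     (Lx = \<infinity> \<and> Ly = \<infinity>) \<or>
     (\<exists>a. Lx = enat a \<and>
        (if s then Ly = enat (nat (\<bar>m\<bar> * int a div gcd (int a) n))
              else Ly = enat (nat (\<bar>n\<bar> * int a div gcd (int a) m))))"

definition tword :: "bool \<Rightarrow> nat \<Rightarrow> word" where
  "tword s L = [(T, s)] @ replicate L (B, True) @ [(T, \<not> s)]"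

end

theory Submission
  imports Defs
begin

(* Label each vertex p of the component of x0 in the extended Schreier graph by a group
   element sigma p: an old vertex by the element read along some path of Sch(alpha0) from x0
   to p, the vertex y beta^k of the new orbit by Psi(c) t^eps b^k.  Let H be generated by
   Stab_alpha0(x0) and gamma = Psi(c) t^eps b^Ly t^-eps Psi(c)^-1.  Along every edge
   p --a--> q one has sigma p * a in H * sigma q: for an old edge the defect is read along a
   closed path of Sch(alpha0); along the new orbit it is a power of gamma, as k is determined
   modulo Ly; across a new t-edge from x beta0^(j n') to y beta^(j m') the relation
   t b^m t^-1 = b^n moves b^(j m') past t^eps.  So every closed path at x0 reads an element of
   H, and gamma itself is read along c, t^eps, once around the new orbit, t^-eps, c^-1.
   The transfer rule makes the new tau injective, so t-edges can be traversed backwards.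
   If Ly is infinite or maximal, then Ly = k m' and b^(k n') fixes x, hence
   gamma = Psi(c) b^(k n') Psi(c)^-1 already lies in Stab_alpha0(x0). *)

section \<open>The group BS(m,n)\<close>

lemma equiv_bs_rel: "equiv UNIV (bs_rel m n)"
  by (rule equivI) (auto simp: refl_on_def intro: symI transI bs_rel.refl bs_rel.sym bs_rel.trans)

lemma gcls_eq_iff: "gcls m n u = gcls m n v \<longleftrightarrow> (u, v) \<in> bs_rel m n"
  unfolding gcls_def using equiv_class_eq_iff[OF equiv_bs_rel] by auto

lemma bs_rel_append:
  "(u, u') \<in> bs_rel m n \<Longrightarrow> (v, v') \<in> bs_rel m n \<Longrightarrow> (u @ v, u' @ v') \<in> bs_rel m n"
  using bs_rel.cong[of u u' m n "[]" v] bs_rel.cong[of v v' m n u' "[]"]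
  by (auto intro: bs_rel.trans)

lemma carrier_BS: "carrier (BS m n) = range (gcls m n)"
  unfolding BS_def gcls_def quotient_def by auto

lemma one_BS: "\<one>\<^bsub>BS m n\<^esub> = gcls m n []"
  by (simp add: BS_def)

lemma mult_BS: "gcls m n u \<otimes>\<^bsub>BS m n\<^esub> gcls m n v = gcls m n (u @ v)"
proof -
  have "gcls m n (u' @ v') = gcls m n (u @ v)" if "u' \<in> gcls m n u" "v' \<in> gcls m n v" for u' v'
  proof -
    have "(u @ v, u' @ v') \<in> bs_rel m n"
      using that bs_rel_append[of u u' m n v v'] by (simp add: gcls_def)
    then show ?thesis
      by (simp add: gcls_eq_iff bs_rel.sym)
  qed
  then have "(\<Union>u'\<in>gcls m n u. \<Union>v'\<in>gcls m n v. gcls m n (u' @ v'))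
      = (\<Union>u'\<in>gcls m n u. \<Union>v'\<in>gcls m n v. gcls m n (u @ v))"
    by (intro SUP_cong) auto
  also have "\<dots> = gcls m n (u @ v)"
    using bs_rel.refl[of u m n] bs_rel.refl[of v m n] by (auto simp: gcls_def)
  finally show ?thesis
    by (simp add: BS_def)
qed

definition flip :: "gen \<times> bool \<Rightarrow> gen \<times> bool" where
  "flip a = (fst a, \<not> snd a)"

definition winv :: "word \<Rightarrow> word" where
  "winv w = rev (map flip w)"

lemma winv_Nil [simp]: "winv [] = []"
  by (simp add: winv_def)

lemma winv_append [simp]: "winv (u @ v) = winv v @ winv u"
  by (simp add: winv_def)

lemma winv_Cons [simp]: "winv (a # w) = winv w @ [flip a]"
  by (simp add: winv_def)

lemma bs_rel_winv_cancel: "(winv w @ w, []) \<in> bs_rel m n"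
proof (induction w rule: rev_induct)
  case Nil
  show ?case by (simp add: bs_rel.refl)
next
  case (snoc a w)
  have "([flip a] @ (winv w @ w) @ [a], [flip a] @ [] @ [a]) \<in> bs_rel m n"
    by (rule bs_rel.cong[OF snoc])
  moreover have "([flip a, a], []) \<in> bs_rel m n"
    using bs_rel.cancel[of "fst a" "\<not> snd a"] by (simp add: flip_def)
  ultimately show ?case
    by (auto intro: bs_rel.trans)
qed

lemma group_BS: "group (BS m n)"
proof (rule groupI)
  fix x
  assume "x \<in> carrier (BS m n)"
  then obtain w where "x = gcls m n w"
    by (auto simp: carrier_BS)
  then show "\<exists>y\<in>carrier (BS m n). y \<otimes>\<^bsub>BS m n\<^esub> x = \<one>\<^bsub>BS m n\<^esub>"
    by (intro bexI[of _ "gcls m n (winv w)"])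
       (auto simp: carrier_BS mult_BS one_BS gcls_eq_iff bs_rel_winv_cancel)
qed (auto simp: carrier_BS mult_BS one_BS)

interpretation BS: group "BS m n" for m n
  by (rule group_BS)

lemma gcls_in_carrier [simp]: "gcls m n w \<in> carrier (BS m n)"
  by (simp add: carrier_BS)

lemma gcls_append: "gcls m n (u @ v) = gcls m n u \<otimes>\<^bsub>BS m n\<^esub> gcls m n v"
  by (simp add: mult_BS)

lemma gcls_Nil: "gcls m n [] = \<one>\<^bsub>BS m n\<^esub>"
  by (simp add: one_BS)

lemma gcls_winv: "gcls m n (winv w) = inv\<^bsub>BS m n\<^esub> (gcls m n w)"
  by (rule BS.inv_equality[symmetric]) (simp_all add: mult_BS one_BS gcls_eq_iff bs_rel_winv_cancel)

lemma gcls_flip: "gcls m n [flip a] = inv\<^bsub>BS m n\<^esub> (gcls m n [a])"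
  using gcls_winv[of m n "[a]"] by simp

lemma gcls_replicate: "gcls m n (replicate k a) = gcls m n [a] [^]\<^bsub>BS m n\<^esub> k"
proof (induction k)
  case (Suc k)
  have "replicate (Suc k) a = replicate k a @ [a]"
    by (simp add: replicate_append_same)
  then show ?case
    using Suc by (simp add: gcls_append)
qed (simp add: gcls_Nil)

lemma gcls_gpow: "gcls m n (gpow g k) = gcls m n [(g, True)] [^]\<^bsub>BS m n\<^esub> k"
proof (cases "k \<ge> 0")
  case True
  then have "gpow g k = replicate (nat k) (g, True)"
    by (simp add: gpow_def)
  moreover have "k = int (nat k)"
    using True by simp
  ultimately show ?thesis
    by (metis gcls_replicate int_pow_int)
next
  case False
  then have "gpow g k = winv (replicate (nat (- k)) (g, True))"
    by (simp add: gpow_def winv_def flip_def)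
  moreover have "k = - int (nat (- k))"
    using False by simp
  ultimately show ?thesis
    by (metis gcls_winv gcls_replicate BS.int_pow_neg_int gcls_in_carrier)
qed

lemma (in group) inv_mult_cancel_left [simp]:
  "x \<in> carrier G \<Longrightarrow> y \<in> carrier G \<Longrightarrow> inv x \<otimes> (x \<otimes> y) = y"
  by (simp add: m_assoc[symmetric])

lemma (in group) conj_int_pow:
  assumes "g \<in> carrier G" "a \<in> carrier G"
  shows "g \<otimes> a [^] (k::int) \<otimes> inv g = (g \<otimes> a \<otimes> inv g) [^] k"
proof -
  have "(\<lambda>a. g \<otimes> a \<otimes> inv g) \<in> hom G G"
    using assms by (intro homI) (simp_all add: m_assoc)
  from hom_int_pow[OF this assms(2) is_group is_group, of k] show ?thesis
    by simp
qed

lemma (in group) conj_pow_mult_eq: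
  assumes "g \<in> carrier G" "b \<in> carrier G"
  shows "(g \<otimes> b [^] P \<otimes> inv g) [^] (i::int) \<otimes> (g \<otimes> b [^] (k::int)) = g \<otimes> b [^] (i * P + k)"
proof -
  have "(g \<otimes> b [^] P \<otimes> inv g) [^] i = g \<otimes> b [^] (i * P) \<otimes> inv g"
    using assms by (simp add: conj_int_pow[symmetric] int_pow_pow mult.commute)
  then show ?thesis
    using assms by (simp add: m_assoc[symmetric]) (simp add: m_assoc int_pow_mult)
qed

lemma (in group) mult_inv_eq_of_mult_eq:
  assumes "a \<in> carrier G" "b \<in> carrier G" "x \<in> carrier G" "h \<in> carrier G"
    and "b \<otimes> x = h \<otimes> a"
  shows "a \<otimes> inv x = inv h \<otimes> b"
proof -
  have "inv h \<otimes> b \<otimes> x = inv h \<otimes> (h \<otimes> a)"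
    using assms by (simp add: m_assoc)
  also have "\<dots> = a"
    using assms by (simp add: m_assoc[symmetric])
  finally show ?thesis
    using assms by (simp add: inv_solve_right')
qed

lemma relator_BS_pow:
  "gcls m n [(T, True)] \<otimes>\<^bsub>BS m n\<^esub> gcls m n [(B, True)] [^]\<^bsub>BS m n\<^esub> (k * m)
     = gcls m n [(B, True)] [^]\<^bsub>BS m n\<^esub> (k * n) \<otimes>\<^bsub>BS m n\<^esub> gcls m n [(T, True)]"
proof -
  let ?t = "gcls m n [(T, True)]" and ?b = "gcls m n [(B, True)]"
  have "gcls m n ([(T, True)] @ gpow B m @ [(T, False)]) = gcls m n (gpow B n)"
    using bs_rel.relator gcls_eq_iff by blast
  moreover have "gcls m n ([(T, True)] @ gpow B m @ [(T, False)])
      = ?t \<otimes>\<^bsub>BS m n\<^esub> (gcls m n (gpow B m) \<otimes>\<^bsub>BS m n\<^esub> gcls m n [(T, False)])"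
    by (simp only: gcls_append)
  ultimately have relator: "?t \<otimes>\<^bsub>BS m n\<^esub> ?b [^]\<^bsub>BS m n\<^esub> m \<otimes>\<^bsub>BS m n\<^esub> inv\<^bsub>BS m n\<^esub> ?t
      = ?b [^]\<^bsub>BS m n\<^esub> n"
    using gcls_flip[of m n "(T, True)"] by (simp add: gcls_gpow flip_def BS.m_assoc)
  have "?t \<otimes>\<^bsub>BS m n\<^esub> ?b [^]\<^bsub>BS m n\<^esub> (k * m) \<otimes>\<^bsub>BS m n\<^esub> inv\<^bsub>BS m n\<^esub> ?t
      = (?t \<otimes>\<^bsub>BS m n\<^esub> ?b [^]\<^bsub>BS m n\<^esub> m \<otimes>\<^bsub>BS m n\<^esub> inv\<^bsub>BS m n\<^esub> ?t) [^]\<^bsub>BS m n\<^esub> k"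
    using BS.conj_int_pow[of ?t m n "?b [^]\<^bsub>BS m n\<^esub> m" k] by (simp add: BS.int_pow_pow mult.commute)
  also have "\<dots> = ?b [^]\<^bsub>BS m n\<^esub> (k * n)"
    by (simp add: relator BS.int_pow_pow mult.commute)
  finally show ?thesis
    by (simp add: BS.inv_solve_right')
qed

section \<open>Integer powers of a bijection\<close>

lemma bpow_0 [simp]: "bpow A f 0 z = z"
  by (simp add: bpow_def)

lemma self_in_borbit: "z \<in> borbit A f z"
  unfolding borbit_def by (auto intro: exI[of _ 0])

context
  fixes A :: "'a set" and f :: "'a \<Rightarrow> 'a"
  assumes bij: "bij_betw f A A"
begin

lemma inv_into_in: "z \<in> A \<Longrightarrow> inv_into A f z \<in> A"
  using bij by (auto simp: bij_betw_def intro: inv_into_into)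

lemma bpow_in: "z \<in> A \<Longrightarrow> bpow A f k z \<in> A"
proof -
  have "(f ^^ j) z \<in> A" "(inv_into A f ^^ j) z \<in> A" if "z \<in> A" for j
    using that bij inv_into_in by (induction j) (auto simp: bij_betw_def)
  then show "z \<in> A \<Longrightarrow> bpow A f k z \<in> A"
    by (simp add: bpow_def)
qed

lemma bpow_succ:
  assumes z: "z \<in> A"
  shows "bpow A f (k + 1) z = f (bpow A f k z)"
proof (cases "k \<ge> 0")
  case True
  then have "nat (k + 1) = Suc (nat k)"
    by simp
  then show ?thesis
    using True by (simp add: bpow_def)
next
  case False
  define j where "j = nat (- (k + 1))"
  have j: "nat (- k) = Suc j" and k1: "nat (- (k + 1)) = j"
    using False by (simp_all add: j_def)
  have inv_in: "(inv_into A f ^^ j) z \<in> A"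
    using z inv_into_in by (induction j) simp_all
  have "f (bpow A f k z) = (inv_into A f ^^ j) z"
    using False j inv_in bij by (simp add: bpow_def bij_betw_def f_inv_into_f)
  moreover have "bpow A f (k + 1) z = (inv_into A f ^^ j) z"
    using False k1 by (cases "k = -1") (simp_all add: bpow_def)
  ultimately show ?thesis
    by simp
qed

lemma bpow_add:
  assumes z: "z \<in> A"
  shows "bpow A f (a + b) z = bpow A f a (bpow A f b z)"
proof (induction a rule: int_induct[where k = 0])
  case (step1 i)
  then show ?case
    using bpow_succ[OF z, of "i + b"] bpow_succ[OF bpow_in[OF z], of i] by (simp add: algebra_simps)
next
  case (step2 i)
  have "bpow A f (i - 1 + b) z = bpow A f (i - 1) (bpow A f b z)"
    if "bpow A f (i + b) z = bpow A f i (bpow A f b z)"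
  proof -
    have "f (bpow A f (i - 1 + b) z) = f (bpow A f (i - 1) (bpow A f b z))"
      using that bpow_succ[OF z, of "i - 1 + b"] bpow_succ[OF bpow_in[OF z], of "i - 1"] by simp
    then show ?thesis
      using bij bpow_in z by (simp add: bij_betw_def inj_on_def)
  qed
  then show ?case
    using step2 by simp
qed simp

lemma bpow_eq_iff:
  assumes z: "z \<in> A"
  shows "bpow A f a z = bpow A f b z \<longleftrightarrow> bpow A f (a - b) z = z"
proof -
  have "bpow A f a z = bpow A f b (bpow A f (a - b) z)"
    using bpow_add[OF z, of b "a - b"] by simp
  moreover have "bpow A f b u = bpow A f b z \<longleftrightarrow> u = z" if "u \<in> A" for u
    using bpow_add[OF that, of "- b" b] bpow_add[OF z, of "- b" b] by auto
  ultimately show ?thesis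
    using bpow_in z by auto
qed

lemma bpow_fixed_mult:
  assumes z: "z \<in> A" and fixed: "bpow A f d z = z"
  shows "bpow A f (q * d) z = z"
proof (induction q rule: int_induct[where k = 0])
  case (step1 i)
  then show ?case
    using bpow_add[OF z, of d "i * d"] fixed by (simp add: algebra_simps)
next
  case (step2 i)
  then show ?case
    using bpow_add[OF z, of "- d" "i * d"] bpow_add[OF z, of "- d" d] fixed
    by (simp add: algebra_simps)
qed simp

lemma bpow_fixed_iff_dvd_least_period:
  assumes z: "z \<in> A" and d: "0 < d" "bpow A f (int d) z = z"
    and minimal: "\<And>e. 0 < e \<Longrightarrow> e < d \<Longrightarrow> bpow A f (int e) z \<noteq> z"
  shows "bpow A f k z = z \<longleftrightarrow> int d dvd k"
proof
  assume fixed: "bpow A f k z = z"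
  have "bpow A f (k mod int d) z = bpow A f (k mod int d) (bpow A f (k div int d * int d) z)"
    using bpow_fixed_mult[OF z d(2)] by simp
  also have "\<dots> = z"
    using bpow_add[OF z, of "k mod int d" "k div int d * int d"] fixed by simp
  finally have "bpow A f (int (nat (k mod int d))) z = z"
    using d(1) by simp
  moreover have "0 \<le> k mod int d" "k mod int d < int d"
    using d(1) by simp_all
  ultimately have "k mod int d = 0"
    using minimal[of "nat (k mod int d)"] by (cases "0 < k mod int d") (auto simp: nat_less_iff)
  then show "int d dvd k"
    by (simp add: dvd_eq_mod_eq_0)
next
  assume "int d dvd k"
  then show "bpow A f k z = z"
    using bpow_fixed_mult[OF z d(2)] by (auto elim: dvdE simp: mult.commute)
qed

lemma card_borbit_eq_period:
  assumes z: "z \<in> A" and "0 < d" and fixed_iff: "\<And>k. bpow A f k z = z \<longleftrightarrow> int d dvd k"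
  shows "card (borbit A f z) = d"
proof -
  have same_iff: "bpow A f i z = bpow A f j z \<longleftrightarrow> i mod int d = j mod int d" for i j
    using fixed_iff bpow_eq_iff[OF z] by (simp add: mod_eq_dvd_iff)
  have "borbit A f z = (\<lambda>k. bpow A f k z) ` {0..<int d}"
  proof
    show "borbit A f z \<subseteq> (\<lambda>k. bpow A f k z) ` {0..<int d}"
      using same_iff \<open>0 < d\<close> by (auto simp: borbit_def intro!: image_eqI[of _ _ "_ mod int d"])
  qed (auto simp: borbit_def)
  moreover have "inj_on (\<lambda>k. bpow A f k z) {0..<int d}"
    using same_iff by (auto intro: inj_onI)
  ultimately show ?thesis
    by (simp add: card_image)
qed

lemma infinite_borbit:
  assumes z: "z \<in> A" and aperiodic: "\<And>k. bpow A f k z = z \<Longrightarrow> k = 0"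
  shows "infinite (borbit A f z)"
proof -
  have "inj (\<lambda>k. bpow A f k z)"
    by (rule injI) (metis aperiodic bpow_eq_iff[OF z] eq_iff_diff_eq_0)
  then have "infinite (range (\<lambda>k. bpow A f k z))"
    by (metis finite_imageD infinite_UNIV_int)
  then show ?thesis
    by (simp add: borbit_def full_SetCompr_eq)
qed

text \<open>Since \<open>card\<close> is \<open>0\<close> on infinite sets, this covers aperiodic points too.\<close>

lemma bpow_fixed_iff_dvd_card_borbit:
  assumes z: "z \<in> A"
  shows "bpow A f k z = z \<longleftrightarrow> int (card (borbit A f z)) dvd k"
proof (cases "\<exists>d>0. bpow A f (int d) z = z")
  case True
  define d where "d = (LEAST d. 0 < d \<and> bpow A f (int d) z = z)"
  have d: "0 < d" "bpow A f (int d) z = z"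
    using LeastI_ex[OF True] by (simp_all add: d_def)
  have "bpow A f (int e) z \<noteq> z" if "0 < e" "e < d" for e
    using not_less_Least[OF \<open>e < d\<close>[unfolded d_def]] that(1) by blast
  then have "bpow A f k z = z \<longleftrightarrow> int d dvd k" for k
    using bpow_fixed_iff_dvd_least_period[OF z d] by blast
  then show ?thesis
    using card_borbit_eq_period[OF z d(1)] by simp
next
  case False
  have aperiodic: "k = 0" if fixed: "bpow A f k z = z" for k
  proof (rule ccontr)
    assume "k \<noteq> 0"
    have "bpow A f (- k) z = z"
      using bpow_add[OF z, of "- k" k] fixed by simp
    then have "bpow A f (int (nat \<bar>k\<bar>)) z = z"
      using fixed by (cases "k \<ge> 0") simp_all
    with \<open>k \<noteq> 0\<close> False show False
      by (metis zero_less_abs_iff zero_less_nat_eq)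
  qed
  then show ?thesis
    using infinite_borbit[OF z] by (auto intro: aperiodic)
qed

lemma bpow_eq_iff_dvd_card_borbit:
  "z \<in> A \<Longrightarrow> bpow A f a z = bpow A f b z \<longleftrightarrow> int (card (borbit A f z)) dvd (a - b)"
  using bpow_eq_iff bpow_fixed_iff_dvd_card_borbit by simp

lemma bpow_mult_in_invariant:
  assumes S: "S \<subseteq> A" "bpow A f d ` S = S" and z: "z \<in> S"
  shows "bpow A f (j * d) z \<in> S"
proof (induction j rule: int_induct[where k = 0])
  case (step1 i)
  then show ?case
    using bpow_add[of z d "i * d"] S z by (auto simp: algebra_simps)
next
  case (step2 i)
  have inverse_in: "bpow A f (- d) w \<in> S" if w: "w \<in> S" for w
  proof -
    obtain w' where "w' \<in> S" "w = bpow A f d w'"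
      using S(2) w by blast
    then show ?thesis
      using bpow_add[of w' "- d" d] S(1) by auto
  qed
  show ?case
    using inverse_in[OF step2(2)] bpow_add[of z "- d" "i * d"] S(1) z
    by (auto simp: algebra_simps)
qed (use z in simp)

end

section \<open>Paths in Schreier graphs\<close>

lemma follow_append:
  "follow X \<beta> \<tau> z (u @ v) = Option.bind (follow X \<beta> \<tau> z u) (\<lambda>z'. follow X \<beta> \<tau> z' v)"
  by (induction u arbitrary: z) (auto split: option.split)

lemma step_B_False_eq_Some:
  assumes "bij_betw \<beta> X X"
  shows "step X \<beta> \<tau> z (B, False) = Some q \<longleftrightarrow> q \<in> X \<and> z = \<beta> q"
  using assms by (auto simp: bij_betw_def inv_into_into f_inv_into_f inv_into_f_f)

lemma step_T_False_eq_Some: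
  assumes "inj_on \<tau> (dom \<tau>)"
  shows "step X \<beta> \<tau> z (T, False) = Some q \<longleftrightarrow> \<tau> q = Some z"
proof -
  have "(THE u. \<tau> u = Some z) = v" if "\<tau> v = Some z" for v
    using assms that by (intro the_equality) (auto simp: inj_on_def dom_def)
  then show ?thesis
    by (auto simp: ran_def)
qed

lemma step_flip:
  assumes "bij_betw \<beta> X X" "inj_on \<tau> (dom \<tau>)" "step X \<beta> \<tau> p l = Some q"
  shows "step X \<beta> \<tau> q (flip l) = Some p"
proof -
  obtain g e where l: "l = (g, e)"
    by fastforce
  show ?thesis
    using assms step_B_False_eq_Some[OF assms(1)] step_T_False_eq_Some[OF assms(2)]
    by (cases g; cases e) (auto simp: l flip_def bij_betw_def split: if_splits)
qed

lemma follow_winv: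
  assumes "bij_betw \<beta> X X" "inj_on \<tau> (dom \<tau>)" "follow X \<beta> \<tau> p w = Some q"
  shows "follow X \<beta> \<tau> q (winv w) = Some p"
  using assms(3)
proof (induction w arbitrary: p)
  case (Cons l w)
  then obtain p' where "step X \<beta> \<tau> p l = Some p'" "follow X \<beta> \<tau> p' w = Some q"
    by (auto split: option.splits)
  then show ?case
    using Cons.IH step_flip[OF assms(1,2)] by (simp add: follow_append)
qed simp

lemma step_in:
  assumes "bij_betw \<beta> X X" "inj_on \<tau> (dom \<tau>)" "dom \<tau> \<subseteq> X" "ran \<tau> \<subseteq> X"
    and "step X \<beta> \<tau> p l = Some q"
  shows "q \<in> X"
proof -
  obtain g e where l: "l = (g, e)"
    by fastforce
  show ?thesis
    using assms step_B_False_eq_Some[OF assms(1)] step_T_False_eq_Some[OF assms(2)]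
    by (cases g; cases e) (auto simp: l bij_betw_def ran_def split: if_splits)
qed

lemma follow_in:
  assumes "bij_betw \<beta> X X" "inj_on \<tau> (dom \<tau>)" "dom \<tau> \<subseteq> X" "ran \<tau> \<subseteq> X"
  shows "p \<in> X \<Longrightarrow> follow X \<beta> \<tau> p w = Some q \<Longrightarrow> q \<in> X"
  by (induction w arbitrary: p) (auto intro: step_in[OF assms] split: option.splits)

lemma follow_gpow_B:
  assumes "bij_betw \<beta> X X" "z \<in> X"
  shows "follow X \<beta> \<tau> z (gpow B k) = Some (bpow X \<beta> k z)"
proof -
  have "follow X \<beta> \<tau> z (replicate j (B, True)) = Some ((\<beta> ^^ j) z)"
    and "follow X \<beta> \<tau> z (replicate j (B, False)) = Some ((inv_into X \<beta> ^^ j) z)" for j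
    using assms(2)
    by (induction j arbitrary: z)
       (simp_all add: funpow_swap1 inv_into_in[OF assms(1)] bij_betw_apply[OF assms(1)])
  then show ?thesis
    by (simp add: gpow_def bpow_def)
qed

lemma Stab_subgroup:
  assumes "bij_betw \<beta> X X" "inj_on \<tau> (dom \<tau>)"
  shows "subgroup (Stab m n X \<beta> \<tau> x0) (BS m n)"
proof (rule BS.subgroupI)
  show "Stab m n X \<beta> \<tau> x0 \<subseteq> carrier (BS m n)"
    by (auto simp: Stab_def)
  show "Stab m n X \<beta> \<tau> x0 \<noteq> {}"
    by (auto simp: Stab_def intro!: exI[of _ "[]"])
next
  fix a
  assume "a \<in> Stab m n X \<beta> \<tau> x0"
  then show "inv\<^bsub>BS m n\<^esub> a \<in> Stab m n X \<beta> \<tau> x0"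
    using follow_winv[OF assms] by (auto simp: Stab_def gcls_winv[symmetric])
next
  fix a b
  assume "a \<in> Stab m n X \<beta> \<tau> x0" "b \<in> Stab m n X \<beta> \<tau> x0"
  then obtain u v where "a = gcls m n u" "follow X \<beta> \<tau> x0 u = Some x0"
    "b = gcls m n v" "follow X \<beta> \<tau> x0 v = Some x0"
    by (auto simp: Stab_def)
  then show "a \<otimes>\<^bsub>BS m n\<^esub> b \<in> Stab m n X \<beta> \<tau> x0"
    by (auto simp: Stab_def mult_BS follow_append intro!: exI[of _ "u @ v"])
qed

lemma follow_transversal:
  assumes H: "subgroup H (BS m n)" and \<sigma>: "\<And>p. \<sigma> p \<in> carrier (BS m n)"
    and edge: "\<And>p l q. p \<in> V \<Longrightarrow> step X \<beta> \<tau> p l = Some q \<Longrightarrow>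
      q \<in> V \<and> (\<exists>h\<in>H. \<sigma> p \<otimes>\<^bsub>BS m n\<^esub> gcls m n [l] = h \<otimes>\<^bsub>BS m n\<^esub> \<sigma> q)"
  shows "p \<in> V \<Longrightarrow> follow X \<beta> \<tau> p w = Some q \<Longrightarrow>
    q \<in> V \<and> (\<exists>h\<in>H. \<sigma> p \<otimes>\<^bsub>BS m n\<^esub> gcls m n w = h \<otimes>\<^bsub>BS m n\<^esub> \<sigma> q)"
proof (induction w arbitrary: p)
  case Nil
  then show ?case
    using subgroup.one_closed[OF H] \<sigma> by (auto simp: gcls_Nil intro!: bexI[of _ "\<one>\<^bsub>BS m n\<^esub>"])
next
  case (Cons l w)
  then obtain p' where "step X \<beta> \<tau> p l = Some p'" "follow X \<beta> \<tau> p' w = Some q"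
    by (auto split: option.splits)
  with Cons.prems(1) Cons.IH obtain h h' where "q \<in> V" "h \<in> H" "h' \<in> H"
    "\<sigma> p \<otimes>\<^bsub>BS m n\<^esub> gcls m n [l] = h \<otimes>\<^bsub>BS m n\<^esub> \<sigma> p'"
    "\<sigma> p' \<otimes>\<^bsub>BS m n\<^esub> gcls m n w = h' \<otimes>\<^bsub>BS m n\<^esub> \<sigma> q"
    using edge by meson
  moreover have "gcls m n (l # w) = gcls m n [l] \<otimes>\<^bsub>BS m n\<^esub> gcls m n w"
    using gcls_append[of m n "[l]" w] by simp
  ultimately have "\<sigma> p \<otimes>\<^bsub>BS m n\<^esub> gcls m n (l # w) = (h \<otimes>\<^bsub>BS m n\<^esub> h') \<otimes>\<^bsub>BS m n\<^esub> \<sigma> q"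
    using subgroup.mem_carrier[OF H] \<sigma> by (simp add: BS.m_assoc[symmetric]) (simp add: BS.m_assoc)
  then show ?case
    using \<open>q \<in> V\<close> \<open>h \<in> H\<close> \<open>h' \<in> H\<close> subgroup.m_closed[OF H] by blast
qed

text \<open>It suffices to check edges with positive labels \<open>b\<close>, \<open>t\<close>, and in both
  directions: a negatively labelled edge is a positive one traversed backwards.\<close>

lemma Stab_subset_subgroup:
  assumes bij: "bij_betw \<beta> X X" and inj: "inj_on \<tau> (dom \<tau>)"
    and H: "subgroup H (BS m n)" and \<sigma>: "\<And>p. \<sigma> p \<in> carrier (BS m n)"
    and x0: "x0 \<in> V" "\<sigma> x0 \<in> H"
    and edge: "\<And>p g q. step X \<beta> \<tau> p (g, True) = Some q \<Longrightarrow> p \<in> V \<or> q \<in> V \<Longrightarrow>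
      p \<in> V \<and> q \<in> V \<and> (\<exists>h\<in>H. \<sigma> p \<otimes>\<^bsub>BS m n\<^esub> gcls m n [(g, True)] = h \<otimes>\<^bsub>BS m n\<^esub> \<sigma> q)"
  shows "Stab m n X \<beta> \<tau> x0 \<subseteq> H"
proof
  have positive_or_negative_edge:
    "q \<in> V \<and> (\<exists>h\<in>H. \<sigma> p \<otimes>\<^bsub>BS m n\<^esub> gcls m n [(g, e)] = h \<otimes>\<^bsub>BS m n\<^esub> \<sigma> q)"
    if p: "p \<in> V" and st: "step X \<beta> \<tau> p (g, e) = Some q" for p g e q
  proof (cases e)
    case True
    then show ?thesis
      using edge[of p g q] p st by simp
  next
    case False
    then have "step X \<beta> \<tau> q (g, True) = Some p"
      using step_flip[OF bij inj st] by (simp add: flip_def)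
    then obtain h where h: "h \<in> H" "\<sigma> q \<otimes>\<^bsub>BS m n\<^esub> gcls m n [(g, True)] = h \<otimes>\<^bsub>BS m n\<^esub> \<sigma> p"
      and q: "q \<in> V"
      using edge p by blast
    then have "\<sigma> p \<otimes>\<^bsub>BS m n\<^esub> gcls m n [(g, e)] = inv\<^bsub>BS m n\<^esub> h \<otimes>\<^bsub>BS m n\<^esub> \<sigma> q"
      using gcls_flip[of m n "(g, True)"] False subgroup.mem_carrier[OF H] \<sigma>
      by (simp add: flip_def BS.mult_inv_eq_of_mult_eq)
    then show ?thesis
      using q h subgroup.m_inv_closed[OF H] by blast
  qed
  have any_edge: "q \<in> V \<and> (\<exists>h\<in>H. \<sigma> p \<otimes>\<^bsub>BS m n\<^esub> gcls m n [l] = h \<otimes>\<^bsub>BS m n\<^esub> \<sigma> q)"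
    if "p \<in> V" "step X \<beta> \<tau> p l = Some q" for p l q
    using positive_or_negative_edge[of p "fst l" "snd l" q] that by simp
  fix a
  assume "a \<in> Stab m n X \<beta> \<tau> x0"
  then obtain w where a: "a = gcls m n w" and "follow X \<beta> \<tau> x0 w = Some x0"
    by (auto simp: Stab_def)
  then obtain h where "h \<in> H" "\<sigma> x0 \<otimes>\<^bsub>BS m n\<^esub> a = h \<otimes>\<^bsub>BS m n\<^esub> \<sigma> x0"
    using follow_transversal[OF H \<sigma> any_edge x0(1)] by blast
  then have "a = inv\<^bsub>BS m n\<^esub> \<sigma> x0 \<otimes>\<^bsub>BS m n\<^esub> h \<otimes>\<^bsub>BS m n\<^esub> \<sigma> x0"
    using a subgroup.mem_carrier[OF H] \<sigma> by (simp add: BS.inv_solve_left BS.m_assoc)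
  then show "a \<in> H"
    using \<open>h \<in> H\<close> x0(2) H by (simp add: subgroup.m_closed subgroup.m_inv_closed)
qed

section \<open>One orbit free extensions\<close>

lemma dvd_mult_iff_div_gcd_dvd:
  fixes a k m :: int
  assumes "0 < a"
  shows "a dvd k * m \<longleftrightarrow> a div gcd a m dvd k"
proof -
  define g where "g = gcd a m"
  have g: "0 < g"
    using assms by (simp add: g_def)
  have "a = a div g * g" "m = m div g * g"
    by (simp_all add: g_def)
  then have "a dvd k * m \<longleftrightarrow> a div g * g dvd k * (m div g) * g"
    by (metis mult.assoc mult.commute)
  also have "\<dots> \<longleftrightarrow> a div g dvd k * (m div g)"
    using g by simp
  also have "\<dots> \<longleftrightarrow> a div g dvd k"
    using assms by (simp add: g_def div_gcd_coprime coprime_dvd_mult_left_iff)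
  finally show ?thesis
    by (simp add: g_def)
qed

lemma ecard_eq_enat_iff: "ecard A = enat k \<longleftrightarrow> finite A \<and> card A = k"
  by (simp add: ecard_def)

lemma ecard_eq_infinity_iff: "ecard A = \<infinity> \<longleftrightarrow> infinite A"
  by (simp add: ecard_def)

lemma map_eq_Some_iff_extension:
  assumes "dom \<tau> = dom \<tau>0 \<union> range a" "\<forall>z \<in> dom \<tau>0. \<tau> z = \<tau>0 z" "\<forall>j. \<tau> (a j) = Some (b j)"
  shows "\<tau> u = Some v \<longleftrightarrow> \<tau>0 u = Some v \<or> (\<exists>j. u = a j \<and> v = b j)"
proof
  assume uv: "\<tau> u = Some v"
  show "\<tau>0 u = Some v \<or> (\<exists>j. u = a j \<and> v = b j)"
  proof (cases "u \<in> dom \<tau>0")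
    case False
    then obtain j where "u = a j"
      using assms(1) uv by blast
    then show ?thesis
      using assms(3) uv by auto
  qed (use assms(2) uv in auto)
next
  assume "\<tau>0 u = Some v \<or> (\<exists>j. u = a j \<and> v = b j)"
  then show "\<tau> u = Some v"
    using assms(2,3) by (auto simp: dom_def)
qed

locale one_orbit_extension =
  fixes m n :: int and r :: "enat \<Rightarrow> bool \<Rightarrow> enat"
    and X0 X Y :: "'a set" and \<beta>0 \<beta> :: "'a \<Rightarrow> 'a" and \<tau>0 \<tau> :: "'a \<rightharpoonup> 'a"
    and x y :: 'a and s :: bool
  assumes m_nonzero: "m \<noteq> 0" and n_nonzero: "n \<noteq> 0"
    and transfer: "transfer_rule m n r"
    and pre: "pre_action m n X0 \<beta>0 \<tau>0"
    and ext: "one_orbit_free_ext m n r X0 \<beta>0 \<tau>0 x X \<beta> \<tau> Y y s"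
begin

text \<open>The new \<open>t\<close>-edges are \<open>x \<beta>0^(j n) \<mapsto> y \<beta>^(j m)\<close> for a positive and
  \<open>y \<beta>^(j n) \<mapsto> x \<beta>0^(j m)\<close> for a negative extension.  With \<open>(m', n') = (m, n)\<close>
  resp. \<open>(n, m)\<close> both are the edges labelled \<open>t^\<epsilon>\<close> from \<open>x \<beta>0^(j n')\<close> to
  \<open>y \<beta>^(j m')\<close>.\<close>

definition m' :: int where "m' = (if s then m else n)"
definition n' :: int where "n' = (if s then n else m)"

definition new_edge :: "'a \<Rightarrow> 'a \<Rightarrow> bool" where
  "new_edge p q \<longleftrightarrow> (\<exists>j. p = bpow X0 \<beta>0 (j * n') x \<and> q = bpow Y \<beta> (j * m') y)"

text \<open>\<open>card\<close> is \<open>0\<close> on infinite sets, so \<open>Ly = 0\<close> for an infinite new orbit.\<close>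

definition Lx :: nat where "Lx = card (borbit X0 \<beta>0 x)"
definition Ly :: nat where "Ly = card Y"

lemma m'_nonzero: "m' \<noteq> 0" and n'_nonzero: "n' \<noteq> 0"
  using m_nonzero n_nonzero by (simp_all add: m'_def n'_def)

lemma bij_X0: "bij_betw \<beta>0 X0 X0" and inj_\<tau>0: "inj_on \<tau>0 (dom \<tau>0)"
  and dom_\<tau>0: "dom \<tau>0 \<subseteq> X0" and ran_\<tau>0: "ran \<tau>0 \<subseteq> X0"
  and ran_\<tau>0_invariant: "bpow X0 \<beta>0 m ` ran \<tau>0 = ran \<tau>0"
  using pre by (simp_all add: pre_action_def)

lemma x_in: "x \<in> X0" and y_in: "y \<in> Y" and disjoint: "Y \<inter> X0 = {}"
  and bij_Y: "bij_betw \<beta> Y Y" and Y_eq_borbit: "Y = borbit Y \<beta> y"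
  and ecard_Y: "ecard Y = r (ecard (borbit X0 \<beta>0 x)) s"
  and X_eq: "X = X0 \<union> Y" and \<beta>_eq: "\<And>z. z \<in> X0 \<Longrightarrow> \<beta> z = \<beta>0 z"
  using ext by (simp_all add: one_orbit_free_ext_def)

lemma \<tau>_eq_Some_iff: "\<tau> u = Some v \<longleftrightarrow> \<tau>0 u = Some v \<or> (if s then new_edge u v else new_edge v u)"
proof -
  have agree: "\<forall>z \<in> dom \<tau>0. \<tau> z = \<tau>0 z"
    using ext by (simp add: one_orbit_free_ext_def)
  show ?thesis
  proof (cases s)
    case True
    then have "dom \<tau> = dom \<tau>0 \<union> range (\<lambda>j. bpow X0 \<beta>0 (j * n) x)"
      "\<forall>j. \<tau> (bpow X0 \<beta>0 (j * n) x) = Some (bpow Y \<beta> (j * m) y)"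
      using ext by (auto simp: one_orbit_free_ext_def full_SetCompr_eq)
    then show ?thesis
      using map_eq_Some_iff_extension[OF _ agree, where a = "\<lambda>j. bpow X0 \<beta>0 (j * n) x"
          and b = "\<lambda>j. bpow Y \<beta> (j * m) y"] True
      unfolding new_edge_def m'_def n'_def by simp
  next
    case False
    then have "dom \<tau> = dom \<tau>0 \<union> range (\<lambda>j. bpow Y \<beta> (j * n) y)"
      "\<forall>j. \<tau> (bpow Y \<beta> (j * n) y) = Some (bpow X0 \<beta>0 (j * m) x)"
      using ext by (auto simp: one_orbit_free_ext_def full_SetCompr_eq)
    then show ?thesis
      using map_eq_Some_iff_extension[OF _ agree, where a = "\<lambda>j. bpow Y \<beta> (j * n) y"
          and b = "\<lambda>j. bpow X0 \<beta>0 (j * m) x"] False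
      unfolding new_edge_def m'_def n'_def by auto
  qed
qed

lemma card_orbits_dvd_iff: "int Ly dvd d * m' \<longleftrightarrow> int Lx dvd d * n'"
proof -
  define L where "L = ecard (borbit X0 \<beta>0 x)"
  have "1 \<le> L"
    using self_in_borbit[of x X0 \<beta>0]
    by (auto simp: L_def ecard_def one_enat_def Suc_le_eq card_gt_0_iff)
  then have r: "(L = \<infinity> \<longleftrightarrow> r L s = \<infinity>) \<and>
      (\<forall>a b. L = enat a \<longrightarrow> r L s = enat b \<longrightarrow>
        (if s then int a div gcd (int a) n = int b div gcd (int b) m
              else int a div gcd (int a) m = int b div gcd (int b) n))"
    using transfer by (simp add: transfer_rule_def)
  have Y: "ecard Y = r L s"
    using ecard_Y by (simp add: L_def)
  show ?thesis
  proof (cases L)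
    case (enat a)
    then obtain b where b: "ecard Y = enat b"
      using r Y by (cases "r L s") auto
    then have "Lx = a" "Ly = b" "0 < a" "0 < b"
      using enat self_in_borbit[of x X0 \<beta>0] y_in
      by (auto simp: L_def Lx_def Ly_def ecard_eq_enat_iff card_gt_0_iff)
    moreover have "int a div gcd (int a) n' = int b div gcd (int b) m'"
      using r enat b Y unfolding m'_def n'_def by (cases s) simp_all
    ultimately show ?thesis
      by (simp add: dvd_mult_iff_div_gcd_dvd)
  next
    case infinity
    then have "Lx = 0" "Ly = 0"
      using r Y by (simp_all add: L_def Lx_def Ly_def ecard_eq_infinity_iff)
    then show ?thesis
      using m'_nonzero n'_nonzero by simp
  qed
qed

lemma new_edge_in: "new_edge p q \<Longrightarrow> p \<in> X0 \<and> q \<in> Y"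
  using bpow_in[OF bij_X0 x_in] bpow_in[OF bij_Y y_in] by (auto simp: new_edge_def)

lemma new_edge_eq_iff:
  assumes "new_edge p q" "new_edge p' q'"
  shows "p = p' \<longleftrightarrow> q = q'"
proof -
  obtain j j' where "p = bpow X0 \<beta>0 (j * n') x" "q = bpow Y \<beta> (j * m') y"
    "p' = bpow X0 \<beta>0 (j' * n') x" "q' = bpow Y \<beta> (j' * m') y"
    using assms by (auto simp: new_edge_def)
  moreover have "int Ly dvd (j - j') * m' \<longleftrightarrow> int Lx dvd (j - j') * n'"
    by (rule card_orbits_dvd_iff)
  ultimately show ?thesis
    using bpow_eq_iff_dvd_card_borbit[OF bij_X0 x_in] bpow_eq_iff_dvd_card_borbit[OF bij_Y y_in]
    by (simp add: Lx_def Ly_def Y_eq_borbit[symmetric] left_diff_distrib)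
qed

lemma bij_X: "bij_betw \<beta> X X"
proof -
  have "bij_betw \<beta> X0 X0"
    using bij_betw_cong[of X0 \<beta> \<beta>0 X0] \<beta>_eq bij_X0 by simp
  then show ?thesis
    using bij_Y disjoint by (simp add: X_eq bij_betw_combine Int_commute)
qed

lemma x_notin_ran_\<tau>0: "\<not> s \<Longrightarrow> x \<notin> ran \<tau>0"
  using ext by (simp add: one_orbit_free_ext_def)

lemma inj_\<tau>: "inj_on \<tau> (dom \<tau>)"
proof (rule inj_onI)
  fix u v
  assume "u \<in> dom \<tau>" "v \<in> dom \<tau>" "\<tau> u = \<tau> v"
  then obtain w where u: "\<tau> u = Some w" and v: "\<tau> v = Some w"
    by auto
  have old_new_disjoint: False
    if old: "\<tau>0 u' = Some w" and new: "if s then new_edge v' w else new_edge w v'" for u' v'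
  proof (cases s)
    case True
    then show False
      using old new ran_\<tau>0 disjoint new_edge_in by (auto simp: ran_def)
  next
    case False
    then obtain j where "bpow X0 \<beta>0 (j * m) x \<in> ran \<tau>0"
      using old new unfolding new_edge_def n'_def by (auto simp: ran_def)
    then have "bpow X0 \<beta>0 (- j * m) (bpow X0 \<beta>0 (j * m) x) \<in> ran \<tau>0"
      using bpow_mult_in_invariant[OF bij_X0 ran_\<tau>0 ran_\<tau>0_invariant] by blast
    then show False
      using x_notin_ran_\<tau>0 False bpow_add[OF bij_X0 x_in, of "- j * m" "j * m"] by simp
  qed
  show "u = v"
    using u v inj_\<tau>0 old_new_disjoint new_edge_eq_iff[of u w v w] new_edge_eq_iff[of w u w v]
    unfolding \<tau>_eq_Some_iff by (cases s) (auto simp: inj_on_def dom_def)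
qed

lemma step_positive_cases:
  assumes "step X \<beta> \<tau> p (g, True) = Some q"
  shows "step X0 \<beta>0 \<tau>0 p (g, True) = Some q \<or> (g = B \<and> p \<in> Y \<and> q = \<beta> p)
    \<or> (g = T \<and> (if s then new_edge p q else new_edge q p))"
  using assms \<beta>_eq X_eq \<tau>_eq_Some_iff by (cases g) (auto split: if_splits)

lemma step_lift:
  assumes "step X0 \<beta>0 \<tau>0 p l = Some q"
  shows "step X \<beta> \<tau> p l = Some q"
proof -
  have positive: "step X \<beta> \<tau> p (g, True) = Some q" if "step X0 \<beta>0 \<tau>0 p (g, True) = Some q" for p g q
    using that \<beta>_eq X_eq \<tau>_eq_Some_iff by (cases g) (auto split: if_splits)
  obtain g e where l: "l = (g, e)"
    by fastforce
  show ?thesis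
  proof (cases e)
    case False
    then have "step X0 \<beta>0 \<tau>0 q (g, True) = Some p"
      using step_flip[OF bij_X0 inj_\<tau>0 assms] l by (simp add: flip_def)
    then show ?thesis
      using step_flip[OF bij_X inj_\<tau> positive] l False by (simp add: flip_def)
  qed (use assms positive l in simp)
qed

lemma follow_lift: "follow X0 \<beta>0 \<tau>0 p w = Some q \<Longrightarrow> follow X \<beta> \<tau> p w = Some q"
  by (induction w arbitrary: p) (auto simp: step_lift split: option.splits)

lemma m'_dvd_Ly_if_maximal:
  assumes "ecard Y = \<infinity> \<or> maximal_ext m n s (ecard (borbit X0 \<beta>0 x)) (ecard Y)"
  shows "m' dvd int Ly"
proof (cases "finite Y")
  case True
  have "\<exists>a. Ly = nat (\<bar>m'\<bar> * int a div gcd (int a) n')"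
    using assms True unfolding maximal_ext_def m'_def n'_def
    by (cases s) (auto simp: Ly_def ecard_def)
  then obtain a where "Ly = nat (\<bar>m'\<bar> * (int a div gcd (int a) n'))"
    by (auto simp: div_mult_swap)
  then have "int Ly = \<bar>m'\<bar> * (int a div gcd (int a) n')"
    by (simp add: div_int_pos_iff)
  then show ?thesis
    by simp
qed (simp add: Ly_def)

end

section \<open>The stabiliser after a one orbit free extension\<close>

locale pointed_one_orbit_extension = one_orbit_extension +
  fixes x0 :: 'a and c :: word
  assumes x0_in: "x0 \<in> X0" and path_c: "follow X0 \<beta>0 \<tau>0 x0 c = Some x"
begin

abbreviation G :: "word set monoid" where "G \<equiv> BS m n"
abbreviation Stab0 :: "word set set" where "Stab0 \<equiv> Stab m n X0 \<beta>0 \<tau>0 x0"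

definition reach0 :: "'a set" where
  "reach0 = {p. \<exists>w. follow X0 \<beta>0 \<tau>0 x0 w = Some p}"

definition path_to :: "'a \<Rightarrow> word" where
  "path_to p = (SOME w. follow X0 \<beta>0 \<tau>0 x0 w = Some p)"

definition y_exponent :: "'a \<Rightarrow> int" where
  "y_exponent q = (SOME k. q = bpow Y \<beta> k y)"

definition psi_c :: "word set" where "psi_c = gcls m n c"
definition t_eps :: "word set" where "t_eps = gcls m n [(T, s)]"
definition b_gen :: "word set" where "b_gen = gcls m n [(B, True)]"

definition \<gamma> :: "word set" where
  "\<gamma> = psi_c \<otimes>\<^bsub>G\<^esub> gcls m n (tword s Ly) \<otimes>\<^bsub>G\<^esub> inv\<^bsub>G\<^esub> psi_c"

definition transversal :: "'a \<Rightarrow> word set" where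
  "transversal p =
    (if p \<in> Y then psi_c \<otimes>\<^bsub>G\<^esub> t_eps \<otimes>\<^bsub>G\<^esub> b_gen [^]\<^bsub>G\<^esub> y_exponent p else gcls m n (path_to p))"

lemma psi_c_in [simp]: "psi_c \<in> carrier G" and t_eps_in [simp]: "t_eps \<in> carrier G"
  and b_gen_in [simp]: "b_gen \<in> carrier G" and \<gamma>_in [simp]: "\<gamma> \<in> carrier G"
  and transversal_in [simp]: "transversal p \<in> carrier G"
  by (simp_all add: psi_c_def t_eps_def b_gen_def \<gamma>_def transversal_def)

lemma t_eps_b_pow: "t_eps \<otimes>\<^bsub>G\<^esub> b_gen [^]\<^bsub>G\<^esub> (k * m') = b_gen [^]\<^bsub>G\<^esub> (k * n') \<otimes>\<^bsub>G\<^esub> t_eps"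
proof (cases s)
  case True
  then show ?thesis
    using relator_BS_pow[of m n k] unfolding t_eps_def b_gen_def m'_def n'_def by simp
next
  case False
  have "gcls m n [(T, False)] = inv\<^bsub>G\<^esub> gcls m n [(T, True)]"
    using gcls_flip[of m n "(T, True)"] by (simp add: flip_def)
  then show ?thesis
    using relator_BS_pow[of m n k] False unfolding t_eps_def b_gen_def m'_def n'_def
    by (simp add: BS.mult_inv_eq_of_mult_eq[symmetric])
qed

lemma \<gamma>_conj: "\<gamma> = (psi_c \<otimes>\<^bsub>G\<^esub> t_eps) \<otimes>\<^bsub>G\<^esub> b_gen [^]\<^bsub>G\<^esub> int Ly \<otimes>\<^bsub>G\<^esub> inv\<^bsub>G\<^esub> (psi_c \<otimes>\<^bsub>G\<^esub> t_eps)"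
proof -
  have "gcls m n (tword s Ly)
      = gcls m n [(T, s)] \<otimes>\<^bsub>G\<^esub> (gcls m n (replicate Ly (B, True)) \<otimes>\<^bsub>G\<^esub> gcls m n [(T, \<not> s)])"
    by (simp only: tword_def gcls_append)
  then have "gcls m n (tword s Ly) = t_eps \<otimes>\<^bsub>G\<^esub> b_gen [^]\<^bsub>G\<^esub> Ly \<otimes>\<^bsub>G\<^esub> inv\<^bsub>G\<^esub> t_eps"
    using gcls_flip[of m n "(T, s)"]
    by (simp add: gcls_replicate t_eps_def b_gen_def flip_def BS.m_assoc)
  then show ?thesis
    by (simp add: \<gamma>_def int_pow_int BS.inv_mult_group BS.m_assoc)
qed

lemma \<gamma>_pow_mult: "\<gamma> [^]\<^bsub>G\<^esub> i \<otimes>\<^bsub>G\<^esub> (psi_c \<otimes>\<^bsub>G\<^esub> t_eps \<otimes>\<^bsub>G\<^esub> b_gen [^]\<^bsub>G\<^esub> k)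
    = psi_c \<otimes>\<^bsub>G\<^esub> t_eps \<otimes>\<^bsub>G\<^esub> b_gen [^]\<^bsub>G\<^esub> (i * int Ly + k)"
  using BS.conj_pow_mult_eq[of "psi_c \<otimes>\<^bsub>G\<^esub> t_eps" m n b_gen "int Ly" i k] by (simp add: \<gamma>_conj)

lemma reach0_subset: "reach0 \<subseteq> X0"
  using follow_in[OF bij_X0 inj_\<tau>0 dom_\<tau>0 ran_\<tau>0 x0_in] by (auto simp: reach0_def)

lemma follow_path_to: "p \<in> reach0 \<Longrightarrow> follow X0 \<beta>0 \<tau>0 x0 (path_to p) = Some p"
  unfolding reach0_def path_to_def by (auto intro: someI_ex)

lemma transversal_reach0: "p \<in> reach0 \<Longrightarrow> transversal p = gcls m n (path_to p)"
  using reach0_subset disjoint by (auto simp: transversal_def)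

lemma transversal_x0_in_Stab0: "transversal x0 \<in> Stab0"
proof -
  have "x0 \<in> reach0"
    by (auto simp: reach0_def intro: exI[of _ "[]"])
  then show ?thesis
    using follow_path_to transversal_reach0 by (auto simp: Stab_def)
qed

lemma reach0_step:
  assumes "step X0 \<beta>0 \<tau>0 p l = Some q" "p \<in> reach0 \<or> q \<in> reach0"
  shows "p \<in> reach0 \<and> q \<in> reach0"
proof -
  have forward: "q' \<in> reach0" if "p' \<in> reach0" "step X0 \<beta>0 \<tau>0 p' l' = Some q'" for p' l' q'
    using follow_path_to[OF that(1)] that(2)
    by (auto simp: reach0_def follow_append intro!: exI[of _ "path_to p' @ [l']"])
  show ?thesis
    using assms forward step_flip[OF bij_X0 inj_\<tau>0 assms(1)] by blast
qed

lemma follow_c_gpow: "follow X0 \<beta>0 \<tau>0 x0 (c @ gpow B k) = Some (bpow X0 \<beta>0 k x)"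
  using path_c follow_gpow_B[OF bij_X0 x_in] by (simp add: follow_append)

lemma new_edge_reach0: "new_edge p q \<Longrightarrow> p \<in> reach0"
  using follow_c_gpow by (auto simp: new_edge_def reach0_def)

lemma y_exponent_eq:
  assumes "q = bpow Y \<beta> k y"
  shows "\<exists>i. y_exponent q = i * int Ly + k"
proof -
  have "q = bpow Y \<beta> (y_exponent q) y"
    using assms unfolding y_exponent_def by (rule someI)
  then have "bpow Y \<beta> (y_exponent q) y = bpow Y \<beta> k y"
    using assms by simp
  then have "int Ly dvd y_exponent q - k"
    using bpow_eq_iff_dvd_card_borbit[OF bij_Y y_in] by (simp add: Ly_def Y_eq_borbit[symmetric])
  then show ?thesis
    by (auto elim!: dvdE simp: algebra_simps)
qed

lemma transversal_old_edge:
  assumes "p \<in> reach0" "q \<in> reach0" "step X0 \<beta>0 \<tau>0 p l = Some q"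
  shows "\<exists>h\<in>Stab0. transversal p \<otimes>\<^bsub>G\<^esub> gcls m n [l] = h \<otimes>\<^bsub>G\<^esub> transversal q"
proof
  let ?h = "transversal p \<otimes>\<^bsub>G\<^esub> gcls m n [l] \<otimes>\<^bsub>G\<^esub> inv\<^bsub>G\<^esub> transversal q"
  have "?h = gcls m n (path_to p @ [l] @ winv (path_to q))"
    by (simp only: transversal_reach0[OF assms(1)] transversal_reach0[OF assms(2)]
        gcls_append gcls_winv)
       (simp add: BS.m_assoc)
  moreover have "follow X0 \<beta>0 \<tau>0 x0 (path_to p @ [l] @ winv (path_to q)) = Some x0"
    using follow_path_to[OF assms(1)] assms(3)
      follow_winv[OF bij_X0 inj_\<tau>0 follow_path_to[OF assms(2)]]
    by (simp add: follow_append)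
  ultimately show "?h \<in> Stab0"
    by (auto simp: Stab_def)
  show "transversal p \<otimes>\<^bsub>G\<^esub> gcls m n [l] = ?h \<otimes>\<^bsub>G\<^esub> transversal q"
    by (simp add: BS.m_assoc)
qed

lemma transversal_orbit_edge:
  assumes "p \<in> Y"
  shows "\<exists>i::int. transversal p \<otimes>\<^bsub>G\<^esub> b_gen = \<gamma> [^]\<^bsub>G\<^esub> i \<otimes>\<^bsub>G\<^esub> transversal (\<beta> p)"
proof -
  have "p = bpow Y \<beta> (y_exponent p) y"
    using assms Y_eq_borbit unfolding y_exponent_def borbit_def by (auto intro: someI)
  then have "\<beta> p = bpow Y \<beta> (y_exponent p + 1) y"
    using bpow_succ[OF bij_Y y_in] by simp
  then obtain i where i: "y_exponent (\<beta> p) = i * int Ly + (y_exponent p + 1)"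
    using y_exponent_eq by blast
  have "\<gamma> [^]\<^bsub>G\<^esub> (- i) \<otimes>\<^bsub>G\<^esub> transversal (\<beta> p) = psi_c \<otimes>\<^bsub>G\<^esub> t_eps \<otimes>\<^bsub>G\<^esub> b_gen [^]\<^bsub>G\<^esub> (y_exponent p + 1)"
    using assms bij_betw_apply[OF bij_Y assms] i by (simp add: transversal_def \<gamma>_pow_mult)
  also have "\<dots> = transversal p \<otimes>\<^bsub>G\<^esub> b_gen"
    using assms by (simp add: transversal_def BS.int_pow_mult BS.m_assoc)
  finally show ?thesis
    by metis
qed

lemma transversal_new_edge:
  assumes "new_edge p q"
  shows "\<exists>h\<in>Stab0. \<exists>i::int. transversal p \<otimes>\<^bsub>G\<^esub> t_eps = h \<otimes>\<^bsub>G\<^esub> \<gamma> [^]\<^bsub>G\<^esub> i \<otimes>\<^bsub>G\<^esub> transversal q"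
proof -
  obtain j where p: "p = bpow X0 \<beta>0 (j * n') x" and q: "q = bpow Y \<beta> (j * m') y"
    using assms by (auto simp: new_edge_def)
  obtain i where i: "y_exponent q = i * int Ly + j * m'"
    using y_exponent_eq[OF q] by blast
  define u where "u = psi_c \<otimes>\<^bsub>G\<^esub> b_gen [^]\<^bsub>G\<^esub> (j * n')"
  have u_in: "u \<in> carrier G"
    by (simp add: u_def)
  have "\<gamma> [^]\<^bsub>G\<^esub> (- i) \<otimes>\<^bsub>G\<^esub> transversal q = psi_c \<otimes>\<^bsub>G\<^esub> t_eps \<otimes>\<^bsub>G\<^esub> b_gen [^]\<^bsub>G\<^esub> (j * m')"
    using new_edge_in[OF assms] i by (simp add: transversal_def \<gamma>_pow_mult)
  also have "\<dots> = u \<otimes>\<^bsub>G\<^esub> t_eps"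
    by (simp add: u_def BS.m_assoc t_eps_b_pow)
  finally have u: "u \<otimes>\<^bsub>G\<^esub> t_eps = \<gamma> [^]\<^bsub>G\<^esub> (- i) \<otimes>\<^bsub>G\<^esub> transversal q" ..
  let ?h = "transversal p \<otimes>\<^bsub>G\<^esub> inv\<^bsub>G\<^esub> u"
  have "?h = gcls m n (path_to p @ winv (c @ gpow B (j * n')))"
    using new_edge_reach0[OF assms]
    by (simp add: u_def transversal_reach0 gcls_append gcls_winv gcls_gpow psi_c_def b_gen_def
        BS.inv_mult_group)
  moreover have "follow X0 \<beta>0 \<tau>0 x0 (path_to p @ winv (c @ gpow B (j * n'))) = Some x0"
    using follow_path_to[OF new_edge_reach0[OF assms]] follow_winv[OF bij_X0 inj_\<tau>0 follow_c_gpow] p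
    by (simp add: follow_append)
  ultimately have "?h \<in> Stab0"
    by (auto simp: Stab_def)
  moreover have "transversal p \<otimes>\<^bsub>G\<^esub> t_eps = ?h \<otimes>\<^bsub>G\<^esub> (u \<otimes>\<^bsub>G\<^esub> t_eps)"
    using u_in by (simp add: BS.m_assoc)
  then have "transversal p \<otimes>\<^bsub>G\<^esub> t_eps = ?h \<otimes>\<^bsub>G\<^esub> \<gamma> [^]\<^bsub>G\<^esub> (- i) \<otimes>\<^bsub>G\<^esub> transversal q"
    using u_in by (simp only: u) (simp add: BS.m_assoc)
  ultimately show ?thesis
    by blast
qed

lemma transversal_positive_edge:
  assumes H: "subgroup H G" and Stab0_H: "Stab0 \<subseteq> H" and \<gamma>_H: "\<gamma> \<in> H"
    and st: "step X \<beta> \<tau> p (g, True) = Some q" and V: "p \<in> reach0 \<union> Y \<or> q \<in> reach0 \<union> Y"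
  shows "p \<in> reach0 \<union> Y \<and> q \<in> reach0 \<union> Y \<and>
    (\<exists>h\<in>H. transversal p \<otimes>\<^bsub>G\<^esub> gcls m n [(g, True)] = h \<otimes>\<^bsub>G\<^esub> transversal q)"
proof -
  have \<gamma>_pow: "\<gamma> [^]\<^bsub>G\<^esub> (i::int) \<in> H" for i
    using BS.subgroup_int_pow_closed[OF H \<gamma>_H] .
  have hH: "h \<otimes>\<^bsub>G\<^esub> \<gamma> [^]\<^bsub>G\<^esub> (i::int) \<in> H" if "h \<in> Stab0" for h i
    using that Stab0_H \<gamma>_pow subgroup.m_closed[OF H] by blast
  from step_positive_cases[OF st] show ?thesis
  proof (elim disjE conjE)
    assume old: "step X0 \<beta>0 \<tau>0 p (g, True) = Some q"
    then have "p \<in> reach0 \<and> q \<in> reach0"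
      using V step_in[OF bij_X0 inj_\<tau>0 dom_\<tau>0 ran_\<tau>0] step_flip[OF bij_X0 inj_\<tau>0]
        disjoint reach0_step by blast
    then show ?thesis
      using transversal_old_edge old Stab0_H by blast
  next
    assume B: "g = B" and p: "p \<in> Y" and q: "q = \<beta> p"
    obtain i :: int where "transversal p \<otimes>\<^bsub>G\<^esub> b_gen = \<gamma> [^]\<^bsub>G\<^esub> i \<otimes>\<^bsub>G\<^esub> transversal (\<beta> p)"
      using transversal_orbit_edge[OF p] by blast
    then show ?thesis
      using B p q \<gamma>_pow bij_betw_apply[OF bij_Y p] by (auto simp: b_gen_def)
  next
    assume T: "g = T" and new: "if s then new_edge p q else new_edge q p"
    show ?thesis
    proof (cases s)
      case True
      have "t_eps = gcls m n [(T, True)]"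
        unfolding t_eps_def using True by simp
      moreover have "new_edge p q"
        using new True by simp
      ultimately show ?thesis
        using T transversal_new_edge[of p q] new_edge_reach0 new_edge_in hH by fastforce
    next
      case False
      then obtain h i where h: "h \<in> Stab0"
        and eq: "transversal q \<otimes>\<^bsub>G\<^esub> t_eps = h \<otimes>\<^bsub>G\<^esub> \<gamma> [^]\<^bsub>G\<^esub> (i::int) \<otimes>\<^bsub>G\<^esub> transversal p"
        using new transversal_new_edge by force
      have "transversal p \<otimes>\<^bsub>G\<^esub> inv\<^bsub>G\<^esub> t_eps = inv\<^bsub>G\<^esub> (h \<otimes>\<^bsub>G\<^esub> \<gamma> [^]\<^bsub>G\<^esub> i) \<otimes>\<^bsub>G\<^esub> transversal q"
        using h eq Stab0_H subgroup.mem_carrier[OF H] hH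
        by (intro BS.mult_inv_eq_of_mult_eq) auto
      moreover have "inv\<^bsub>G\<^esub> t_eps = gcls m n [(T, True)]"
        unfolding t_eps_def using False gcls_flip[of m n "(T, True)"] by (simp add: flip_def)
      ultimately show ?thesis
        using False new T new_edge_reach0 new_edge_in h hH subgroup.m_inv_closed[OF H] by auto
    qed
  qed
qed

lemma Stab_subset_subgroup_containing:
  assumes "subgroup H G" "Stab0 \<subseteq> H" "\<gamma> \<in> H"
  shows "Stab m n X \<beta> \<tau> x0 \<subseteq> H"
proof (rule Stab_subset_subgroup[OF bij_X inj_\<tau> assms(1) transversal_in])
  show "x0 \<in> reach0 \<union> Y" "transversal x0 \<in> H"
    using transversal_x0_in_Stab0 assms(2) by (auto simp: reach0_def intro: exI[of _ "[]"])
qed (use transversal_positive_edge[OF assms] in blast)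

lemma Stab0_subset_Stab: "Stab0 \<subseteq> Stab m n X \<beta> \<tau> x0"
  using follow_lift by (auto simp: Stab_def)

lemma follow_tword_loop: "follow X \<beta> \<tau> x (tword s Ly) = Some x"
proof -
  have "new_edge x y"
    using x_in y_in by (auto simp: new_edge_def intro: exI[of _ 0])
  then have "step X \<beta> \<tau> x (T, s) = Some y" "step X \<beta> \<tau> y (T, \<not> s) = Some x"
    using \<tau>_eq_Some_iff[of x y] \<tau>_eq_Some_iff[of y x] step_T_False_eq_Some[OF inj_\<tau>]
    by (cases s; simp)+
  moreover have "bpow Y \<beta> (int Ly) y = y"
    using bpow_fixed_iff_dvd_card_borbit[OF bij_Y y_in] by (simp add: Ly_def Y_eq_borbit[symmetric])
  then have "follow X \<beta> \<tau> y (replicate Ly (B, True)) = Some y"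
    using follow_gpow_B[OF bij_X, where z = y and k = "int Ly"] y_in
    by (simp add: X_eq gpow_def bpow_def)
  ultimately show ?thesis
    by (simp add: tword_def follow_append)
qed

lemma \<gamma>_in_Stab: "\<gamma> \<in> Stab m n X \<beta> \<tau> x0"
proof -
  have "\<gamma> = gcls m n (c @ tword s Ly @ winv c)"
    by (simp only: \<gamma>_def psi_c_def gcls_append gcls_winv) (simp add: BS.m_assoc)
  moreover have "follow X \<beta> \<tau> x0 (c @ tword s Ly @ winv c) = Some x0"
    using follow_lift[OF path_c] follow_tword_loop
      follow_winv[OF bij_X inj_\<tau> follow_lift[OF path_c]]
    by (simp add: follow_append)
  ultimately show ?thesis
    by (auto simp: Stab_def)
qed

lemma Stab_eq_generate: "Stab m n X \<beta> \<tau> x0 = generate G (Stab0 \<union> {\<gamma>})"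
proof
  have "Stab0 \<union> {\<gamma>} \<subseteq> carrier G"
    using subgroup.subset[OF Stab_subgroup[OF bij_X0 inj_\<tau>0]] by simp
  then show "Stab m n X \<beta> \<tau> x0 \<subseteq> generate G (Stab0 \<union> {\<gamma>})"
    by (intro Stab_subset_subgroup_containing BS.generate_is_subgroup) (auto intro: generate.incl)
  show "generate G (Stab0 \<union> {\<gamma>}) \<subseteq> Stab m n X \<beta> \<tau> x0"
    using Stab0_subset_Stab \<gamma>_in_Stab
    by (intro BS.generate_subgroup_incl Stab_subgroup[OF bij_X inj_\<tau>]) auto
qed

lemma \<gamma>_in_Stab0:
  assumes "m' dvd int Ly"
  shows "\<gamma> \<in> Stab0"
proof -
  obtain k where k: "int Ly = k * m'"
    using assms by (metis dvdE mult.commute)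
  then have "int Ly dvd k * m'"
    by simp
  then have "int Lx dvd k * n'"
    using card_orbits_dvd_iff by blast
  then have loop: "bpow X0 \<beta>0 (k * n') x = x"
    using bpow_fixed_iff_dvd_card_borbit[OF bij_X0 x_in] by (simp add: Lx_def)
  have "\<gamma> = psi_c \<otimes>\<^bsub>G\<^esub> (t_eps \<otimes>\<^bsub>G\<^esub> b_gen [^]\<^bsub>G\<^esub> (k * m')) \<otimes>\<^bsub>G\<^esub> inv\<^bsub>G\<^esub> t_eps \<otimes>\<^bsub>G\<^esub> inv\<^bsub>G\<^esub> psi_c"
    by (simp add: \<gamma>_conj k BS.inv_mult_group BS.m_assoc)
  also have "\<dots> = psi_c \<otimes>\<^bsub>G\<^esub> b_gen [^]\<^bsub>G\<^esub> (k * n') \<otimes>\<^bsub>G\<^esub> inv\<^bsub>G\<^esub> psi_c"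
    by (simp add: t_eps_b_pow BS.m_assoc)
  also have "\<dots> = gcls m n (c @ gpow B (k * n') @ winv c)"
    by (simp add: gcls_append gcls_winv gcls_gpow psi_c_def b_gen_def BS.m_assoc)
  finally have "\<gamma> = gcls m n (c @ gpow B (k * n') @ winv c)" .
  moreover have "follow X0 \<beta>0 \<tau>0 x0 (c @ gpow B (k * n') @ winv c) = Some x0"
    using follow_c_gpow[of "k * n'"] loop follow_winv[OF bij_X0 inj_\<tau>0 path_c]
    by (simp add: follow_append[of _ _ _ _ "c @ gpow B (k * n')", simplified])
  ultimately show ?thesis
    by (auto simp: Stab_def)
qed

lemma Stab_eq_Stab0: "m' dvd int Ly \<Longrightarrow> Stab m n X \<beta> \<tau> x0 = Stab0"
  using Stab_subset_subgroup_containing[OF Stab_subgroup[OF bij_X0 inj_\<tau>0] _ \<gamma>_in_Stab0]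
    Stab0_subset_Stab by blast

end

theorem mainTheorem11:
  fixes m n :: int and r :: "enat \<Rightarrow> bool \<Rightarrow> enat"
    and X0 X Y :: "'a set" and \<beta>0 \<beta> :: "'a \<Rightarrow> 'a" and \<tau>0 \<tau> :: "'a \<rightharpoonup> 'a"
    and x y x0 :: 'a and s :: bool and c :: word
  assumes "\<bar>m\<bar> \<ge> 2" and "\<bar>n\<bar> \<ge> 2"
    and "transfer_rule m n r"
    and "pre_action m n X0 \<beta>0 \<tau>0" and "\<not> saturated X0 \<tau>0"
    and "x \<in> X0"
    and "one_orbit_free_ext m n r X0 \<beta>0 \<tau>0 x X \<beta> \<tau> Y y s"
    and "x0 \<in> X0"
    and "follow X0 \<beta>0 \<tau>0 x0 c = Some x"
  shows "(\<forall>Ly. ecard Y = enat Ly \<longrightarrow>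
            Stab m n X \<beta> \<tau> x0 =
              generate (BS m n) (Stab m n X0 \<beta>0 \<tau>0 x0 \<union>
                {gcls m n c \<otimes>\<^bsub>BS m n\<^esub> gcls m n (tword s Ly) \<otimes>\<^bsub>BS m n\<^esub> inv\<^bsub>BS m n\<^esub> (gcls m n c)}))
       \<and> ((ecard Y = \<infinity> \<or> maximal_ext m n s (ecard (borbit X0 \<beta>0 x)) (ecard Y)) \<longrightarrow>
            Stab m n X \<beta> \<tau> x0 = Stab m n X0 \<beta>0 \<tau>0 x0)"
proof -
  interpret pointed_one_orbit_extension m n r X0 X Y \<beta>0 \<beta> \<tau>0 \<tau> x y s x0 c
    using assms by unfold_locales auto
  show ?thesis
    using Stab_eq_generate Stab_eq_Stab0 m'_dvd_Ly_if_maximal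
    by (auto simp: ecard_eq_enat_iff Ly_def \<gamma>_def psi_c_def)
qed

end
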